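(* Let $m>1$ and $n>1$ be naturals, let $\mathcal{F}$ be a surjective linear cellular automaton over $(\mathbb{Z}/m\mathbb{Z})^n$ and let $A\in\mathbb{L}_m^{n\times n}$ be its associated matrix. Then there exists an integer $c\geq0$ (depending only on $A$) such that all of the following hold: (C1) for every $\upsilon\in\mathbb{S}_m^n$ with $\deg^+(\upsilon)=0$ there exist an integer $h$ with $-c\le h\le c$ and $\omega\in\mathbb{S}_m^n$ with $\deg^+(\omega)=h$ and $A\omega=\upsilon$; (C2) for every $\upsilon\in\mathbb{S}_m^n$ with $\deg^-(\upsilon)=0$ there exist an integer $h$ with $-c\le h\le c$ and $\omega\in\mathbb{S}_m^n$ with $\deg^-(\omega)=h$ and $A\omega=\upsilon$; (C3) for every $\upsilon\in\mathbb{S}_m^n$ with $\deg^+(\upsilon)=0$ we have $\deg^+(A\upsilon)=h$ for some integer $-c\le h\le c$; (C4) for every $\upsilon\in\mathbb{S}_m^n$ with $\deg^-(\upsilon)=0$ we have $\deg^-(A\upsilon)=h$ for some integer $-c\le h\le c$.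
   Context: $\mathbb{L}_m=\mathbb{Z}/m\mathbb{Z}[X,X^{-1}]$ and $\mathbb{S}_m=\mathbb{Z}/m\mathbb{Z}[[X,X^{-1}]]$ (bi-infinite formal series $\sum_{i\in\mathbb{Z}}a_iX^i$). An element $\upsilon\in\mathbb{S}_m^n$ is regarded as a formal series $\sum_{i\in\mathbb{Z}}v_iX^i$ with $v_i\in(\mathbb{Z}/m\mathbb{Z})^n$; for $\upsilon\neq0$, $\deg^+(\upsilon)=\sup\{i:v_i\neq0\}$ and $\deg^-(\upsilon)=\inf\{i:v_i\neq0\}$ (which may be $+\infty$, resp. $-\infty$); $\deg^+(0)=-\infty$, $\deg^-(0)=+\infty$. Matrices in $\mathbb{L}_m^{n\times n}$ act on $\mathbb{S}_m^n$ by the usual (well-defined) product. A linear cellular automaton over $(\mathbb{Z}/m\mathbb{Z})^n$ is the map $\mathcal{F}$ on $((\mathbb{Z}/m\mathbb{Z})^n)^{\mathbb{Z}}$ given by $\mathcal{F}(c)_i=\sum_{j=-r}^rA_jc_{i+j}$ for some $r\in\mathbb{N}$ and $A_j\in(\mathbb{Z}/m\mathbb{Z})^{n\times n}$; its associated matrix is $\sum_{j=-r}^rA_jX^{-j}$. It is surjective if $\mathcal{F}$ is a surjective map. *)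

theory Defs
  imports Complex_Main "HOL-Library.Extended_Real"
begin

text \<open>An element of (Z/mZ)^n is a function nat => int whose components j < n
  lie in {0..<m} and whose components j >= n are 0.  An element of S_m^n (bi-infinite formal
  series sum_i v_i X^i) and a configuration in ((Z/mZ)^n)^Z are both functions
  int => nat => int, where u i j is the j-th component of the coefficient v_i.
  A Laurent matrix in L_m^{n x n} is a function M :: int => nat => nat => int, where M k j l is
  the (j,l) entry of the coefficient of X^k (entries taken modulo m; finitely many nonzero).\<close>

definition series :: "nat \<Rightarrow> nat \<Rightarrow> (int \<Rightarrow> nat \<Rightarrow> int) \<Rightarrow> bool" where
  "series m n u \<longleftrightarrow> (\<forall>i j. (j < n \<longrightarrow> 0 \<le> u i j \<and> u i j < int m) \<and> (n \<le> j \<longrightarrow> u i j = 0))"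

text \<open>deg^+ and deg^- with values in the extended reals (covering +/- infinity);
  Sup {} = -inf and Inf {} = +inf give deg^+(0) = -inf, deg^-(0) = +inf.\<close>
definition deg_plus :: "nat \<Rightarrow> nat \<Rightarrow> (int \<Rightarrow> nat \<Rightarrow> int) \<Rightarrow> ereal" where
  "deg_plus m n u = Sup {ereal (real_of_int i) | i. \<exists>j<n. u i j mod int m \<noteq> 0}"

definition deg_minus :: "nat \<Rightarrow> nat \<Rightarrow> (int \<Rightarrow> nat \<Rightarrow> int) \<Rightarrow> ereal" where
  "deg_minus m n u = Inf {ereal (real_of_int i) | i. \<exists>j<n. u i j mod int m \<noteq> 0}"

definition lsupp :: "nat \<Rightarrow> nat \<Rightarrow> (int \<Rightarrow> nat \<Rightarrow> nat \<Rightarrow> int) \<Rightarrow> int set" where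
  "lsupp m n M = {k. \<exists>j<n. \<exists>l<n. M k j l mod int m \<noteq> 0}"

definition lmat_act :: "nat \<Rightarrow> nat \<Rightarrow> (int \<Rightarrow> nat \<Rightarrow> nat \<Rightarrow> int) \<Rightarrow> (int \<Rightarrow> nat \<Rightarrow> int)
    \<Rightarrow> (int \<Rightarrow> nat \<Rightarrow> int)" where
  "lmat_act m n M u = (\<lambda>i j. if j < n then
      (\<Sum>k\<in>lsupp m n M. \<Sum>l<n. M k j l * u (i - k) l) mod int m else 0)"

definition lca :: "nat \<Rightarrow> nat \<Rightarrow> nat \<Rightarrow> (int \<Rightarrow> nat \<Rightarrow> nat \<Rightarrow> int) \<Rightarrow> (int \<Rightarrow> nat \<Rightarrow> int)
    \<Rightarrow> (int \<Rightarrow> nat \<Rightarrow> int)" where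
  "lca m n r Aj c = (\<lambda>i j. if j < n then
      (\<Sum>t\<in>{- int r..int r}. \<Sum>l<n. Aj t j l * c (i + t) l) mod int m else 0)"

definition lca_surjective :: "nat \<Rightarrow> nat \<Rightarrow> nat \<Rightarrow> (int \<Rightarrow> nat \<Rightarrow> nat \<Rightarrow> int) \<Rightarrow> bool" where
  "lca_surjective m n r Aj \<longleftrightarrow> (\<forall>e. series m n e \<longrightarrow> (\<exists>c. series m n c \<and> lca m n r Aj c = e))"

text \<open>Associated matrix sum_{t=-r}^{r} A_t X^{-t}: coefficient of X^k is A_{-k}.\<close>
definition assoc_matrix :: "nat \<Rightarrow> (int \<Rightarrow> nat \<Rightarrow> nat \<Rightarrow> int) \<Rightarrow> (int \<Rightarrow> nat \<Rightarrow> nat \<Rightarrow> int)" where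
  "assoc_matrix r Aj = (\<lambda>k j l. if \<bar>k\<bar> \<le> int r then Aj (- k) j l else 0)"

end

theory Submission
  imports Defs "HOL-Library.FuncSet"
begin

(* Let K = m^(2rn). Surjectivity bounds the kernel of F on finite windows: the configurations
  supported on [a - r, b + r] whose image vanishes on [a, b] number at most K, since adding them
  to fixed lifts of the m^(n(b - a + 1)) patterns on [a, b] is injective. By truncation, the set of
  configurations supported on [-r, oo) whose image vanishes on [0, oo) is finite, with at most K
  elements.

  If u has highest nonzero index h and F u vanished from h - K on, the K + 1 shifted tails of u
  would be distinct members of that set; hence the highest index of F u lies in [h - K, h + r].
  If F w0 = u vanishes above h, two of K + 1 shifted tails of w0 coincide, so w0 is eventually
  periodic; subtracting its periodic extension z, whose image is periodic and eventually zero,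
  hence zero, leaves a preimage bounded above, whose highest index lies in [h - r, h + K] by the
  previous bound. Lowest indices follow by the reflection i -> -i, which turns F into the automaton
  with reversed local rule. *)

lemma sum_symmetric_interval_uminus:
  "(\<Sum>t\<in>{- a..a}. f (- t)) = (\<Sum>t\<in>{- a..(a::int)}. f t)"
  by (rule sum.reindex_bij_witness[of _ uminus uminus]) auto

lemma lca_cong_mod:
  assumes "\<And>i j. j < n \<Longrightarrow> x i j mod int m = y i j mod int m"
  shows "lca m n r Aj x = lca m n r Aj y"
proof (intro ext)
  fix i j
  have "int m dvd (\<Sum>t\<in>{- int r..int r}. \<Sum>l<n. Aj t j l * (x (i + t) l - y (i + t) l))"
    using assms by (intro dvd_sum dvd_mult) (simp add: mod_eq_dvd_iff)
  then show "lca m n r Aj x i j = lca m n r Aj y i j"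
    by (simp add: lca_def algebra_simps sum_subtractf mod_eq_dvd_iff)
qed

lemma lca_diff:
  "j < n \<Longrightarrow> lca m n r Aj (\<lambda>i j. x i j - y i j) i j =
    (lca m n r Aj x i j - lca m n r Aj y i j) mod int m"
  by (simp add: lca_def algebra_simps sum_subtractf mod_diff_eq)

lemma lca_add:
  "j < n \<Longrightarrow> lca m n r Aj (\<lambda>i j. x i j + y i j) i j =
    (lca m n r Aj x i j + lca m n r Aj y i j) mod int m"
  by (simp add: lca_def algebra_simps sum.distrib mod_add_eq)

lemma lca_local:
  assumes "\<And>k l. i - int r \<le> k \<Longrightarrow> k \<le> i + int r \<Longrightarrow> x k l = y k l"
  shows "lca m n r Aj x i j = lca m n r Aj y i j"
  unfolding lca_def using assms by (auto intro!: sum.cong arg_cong[where f = "\<lambda>s. s mod int m"])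

lemma lca_shift: "lca m n r Aj (\<lambda>i. x (i + s)) i j = lca m n r Aj x (i + s) j"
  by (simp add: lca_def algebra_simps)

lemma lca_zero: "lca m n r Aj (\<lambda>_ _. 0) = (\<lambda>_ _. 0)"
  by (simp add: lca_def fun_eq_iff)

lemma series_lca: "m > 0 \<Longrightarrow> series m n (lca m n r Aj x)"
  by (simp add: series_def lca_def)

lemma lmat_act_assoc_matrix:
  assumes "m > 0"
  shows "lmat_act m n (assoc_matrix r Aj) = lca m n r Aj"
proof (intro ext)
  fix u i j
  define A where "A = assoc_matrix r Aj"
  define g where "g k = (\<Sum>l<n. A k j l * u (i - k) l)" for k
  have supp: "lsupp m n A \<subseteq> {- int r..int r}"
    by (auto simp: lsupp_def A_def assoc_matrix_def)
  have "int m dvd g k" if "k \<in> {- int r..int r} - lsupp m n A" "j < n" for k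
    using that unfolding g_def by (intro dvd_sum dvd_mult2) (auto simp: lsupp_def dvd_eq_mod_eq_0)
  then have "j < n \<Longrightarrow> sum g (lsupp m n A) mod int m = sum g {- int r..int r} mod int m"
    using sum.subset_diff[OF supp finite_atLeastAtMost_int, of g]
    by (simp add: dvd_sum mod_add_eq[symmetric] dvd_imp_mod_0 del: Diff_iff)
  moreover have "sum g {- int r..int r} = (\<Sum>t\<in>{- int r..int r}. \<Sum>l<n. Aj t j l * u (i + t) l)"
    using sum_symmetric_interval_uminus[where a = "int r" and f = g]
    by (auto simp: g_def A_def assoc_matrix_def abs_le_iff intro!: sum.cong)
  ultimately show "lmat_act m n (assoc_matrix r Aj) u i j = lca m n r Aj u i j"
    by (simp add: lmat_act_def lca_def A_def g_def)
qed

section \<open>Windows\<close>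

definition window :: "nat \<Rightarrow> nat \<Rightarrow> int \<Rightarrow> int \<Rightarrow> (int \<Rightarrow> nat \<Rightarrow> int) set" where
  "window m n p q = {x. series m n x \<and> (\<forall>i j. i < p \<or> q < i \<longrightarrow> x i j = 0)}"

definition truncate :: "int \<Rightarrow> int \<Rightarrow> (int \<Rightarrow> nat \<Rightarrow> int) \<Rightarrow> int \<Rightarrow> nat \<Rightarrow> int" where
  "truncate p q x = (\<lambda>i j. if p \<le> i \<and> i \<le> q then x i j else 0)"

lemma truncate_in_window: "m > 0 \<Longrightarrow> series m n x \<Longrightarrow> truncate p q x \<in> window m n p q"
  by (auto simp: window_def series_def truncate_def)

lemma bij_betw_window:
  assumes "m > 0"
  shows "bij_betw (\<lambda>f i j. if p \<le> i \<and> i \<le> q \<and> j < n then f (i, j) else 0)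
    (PiE ({p..q} \<times> {..<n}) (\<lambda>_. {0..<int m})) (window m n p q)"
    (is "bij_betw ?g ?P _")
proof (rule bij_betw_imageI)
  show "inj_on ?g ?P"
  proof (rule inj_onI)
    fix f f' assume f: "f \<in> ?P" and f': "f' \<in> ?P" and eq: "?g f = ?g f'"
    show "f = f'"
    proof (rule extensionalityI[of _ "{p..q} \<times> {..<n}"])
      fix ij assume "ij \<in> {p..q} \<times> {..<n}"
      then show "f ij = f' ij" using fun_cong[OF fun_cong[OF eq, of "fst ij"], of "snd ij"] by auto
    qed (use f f' in \<open>auto simp: PiE_def\<close>)
  qed
  show "?g ` ?P = window m n p q"
  proof
    show "?g ` ?P \<subseteq> window m n p q"
      using assms by (auto simp: window_def series_def PiE_iff)
    show "window m n p q \<subseteq> ?g ` ?P"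
    proof
      fix x assume x: "x \<in> window m n p q"
      then have "restrict (\<lambda>(i, j). x i j) ({p..q} \<times> {..<n}) \<in> ?P"
        by (auto simp: window_def series_def)
      moreover have "x = ?g (restrict (\<lambda>(i, j). x i j) ({p..q} \<times> {..<n}))"
        using x by (auto simp: window_def series_def fun_eq_iff not_less)
      ultimately show "x \<in> ?g ` ?P" by blast
    qed
  qed
qed

lemma finite_window: "m > 0 \<Longrightarrow> finite (window m n p q)"
  using bij_betw_finite[OF bij_betw_window] by (simp add: finite_PiE)

lemma card_window: "m > 0 \<Longrightarrow> card (window m n p q) = m ^ (n * nat (q - p + 1))"
  using bij_betw_same_card[OF bij_betw_window]
  by (simp add: card_PiE card_cartesian_product power_mult mult.commute)

section \<open>Highest and lowest nonzero indices\<close>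

definition highest_index :: "nat \<Rightarrow> (int \<Rightarrow> nat \<Rightarrow> int) \<Rightarrow> int \<Rightarrow> bool" where
  "highest_index n x h \<longleftrightarrow> (\<exists>j<n. x h j \<noteq> 0) \<and> (\<forall>i>h. \<forall>j. x i j = 0)"

definition lowest_index :: "nat \<Rightarrow> (int \<Rightarrow> nat \<Rightarrow> int) \<Rightarrow> int \<Rightarrow> bool" where
  "lowest_index n x h \<longleftrightarrow> (\<exists>j<n. x h j \<noteq> 0) \<and> (\<forall>i<h. \<forall>j. x i j = 0)"

lemma exists_highest_index:
  assumes "series m n x" "x i0 j0 \<noteq> 0" "\<And>i j. x i j \<noteq> 0 \<Longrightarrow> i \<le> B"
  obtains h where "highest_index n x h"
proof
  define S where "S = {i. \<exists>j<n. x i j \<noteq> 0} \<inter> {i0..B}"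
  have "i0 \<in> S" using assms by (auto simp: S_def series_def) (metis not_le)
  have "finite S" by (simp add: S_def)
  then have h: "Max S \<in> S" "\<And>i. i \<in> S \<Longrightarrow> i \<le> Max S"
    using \<open>i0 \<in> S\<close> Max_in by auto
  show "highest_index n x (Max S)" unfolding highest_index_def
  proof safe
    show "\<exists>j<n. x (Max S) j \<noteq> 0" using h by (auto simp: S_def)
    fix i j assume "Max S < i"
    show "x i j = 0"
    proof (rule ccontr)
      assume nz: "x i j \<noteq> 0"
      then have "j < n" using assms(1) unfolding series_def by (meson not_le)
      moreover have "i0 \<le> i" using h(2)[OF \<open>i0 \<in> S\<close>] \<open>Max S < i\<close> by simp
      ultimately have "i \<in> S" using nz assms(3) by (auto simp: S_def)
      then show False using h(2) \<open>Max S < i\<close> by fastforce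
    qed
  qed
qed

lemma lca_zero_above_highest_index:
  assumes "highest_index n u h" "h + int r < i"
  shows "lca m n r Aj u i j = 0"
  using lca_local[of i r u "\<lambda>_ _. 0"] assms by (auto simp: highest_index_def lca_zero)

lemma Sup_ereal_of_int_eq_iff:
  fixes S :: "int set"
  shows "Sup {ereal (real_of_int i) | i. i \<in> S} = ereal (real_of_int h) \<longleftrightarrow> h \<in> S \<and> (\<forall>i\<in>S. i \<le> h)"
    (is "?sup = _ \<longleftrightarrow> _")
proof
  assume h: "h \<in> S \<and> (\<forall>i\<in>S. i \<le> h)"
  show "?sup = ereal (real_of_int h)"
  proof (rule antisym)
    show "?sup \<le> ereal (real_of_int h)" using h by (intro Sup_least) auto
    show "ereal (real_of_int h) \<le> ?sup" using h by (intro Sup_upper) auto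
  qed
next
  assume sup: "?sup = ereal (real_of_int h)"
  have le: "i \<le> h" if "i \<in> S" for i
  proof -
    have "ereal (real_of_int i) \<le> ?sup" using that by (intro Sup_upper) auto
    then show ?thesis using sup by simp
  qed
  moreover have "h \<in> S"
  proof (rule ccontr)
    assume "h \<notin> S"
    then have "ereal (real_of_int i) \<le> ereal (real_of_int (h - 1))" if "i \<in> S" for i
      using le[OF that] that by (cases "i = h") (auto simp only: ereal_less_eq(3) of_int_le_iff)
    then have "?sup \<le> ereal (real_of_int (h - 1))" by (intro Sup_least) auto
    then show False using sup by simp
  qed
  ultimately show "h \<in> S \<and> (\<forall>i\<in>S. i \<le> h)" by blast
qed

lemma Inf_ereal_of_int_eq_iff:
  fixes S :: "int set"
  shows "Inf {ereal (real_of_int i) | i. i \<in> S} = ereal (real_of_int h) \<longleftrightarrow> h \<in> S \<and> (\<forall>i\<in>S. h \<le> i)"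
    (is "?inf = _ \<longleftrightarrow> _")
proof
  assume h: "h \<in> S \<and> (\<forall>i\<in>S. h \<le> i)"
  show "?inf = ereal (real_of_int h)"
  proof (rule antisym)
    show "?inf \<le> ereal (real_of_int h)" using h by (intro Inf_lower) auto
    show "ereal (real_of_int h) \<le> ?inf" using h by (intro Inf_greatest) auto
  qed
next
  assume inf: "?inf = ereal (real_of_int h)"
  have le: "h \<le> i" if "i \<in> S" for i
  proof -
    have "?inf \<le> ereal (real_of_int i)" using that by (intro Inf_lower) auto
    then show ?thesis using inf by simp
  qed
  moreover have "h \<in> S"
  proof (rule ccontr)
    assume "h \<notin> S"
    then have "ereal (real_of_int (h + 1)) \<le> ereal (real_of_int i)" if "i \<in> S" for i
      using le[OF that] that by (cases "i = h") (auto simp only: ereal_less_eq(3) of_int_le_iff)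
    then have "ereal (real_of_int (h + 1)) \<le> ?inf" by (intro Inf_greatest) auto
    then show False using inf by simp
  qed
  ultimately show "h \<in> S \<and> (\<forall>i\<in>S. h \<le> i)" by blast
qed

lemma nonzero_indices_series:
  assumes "series m n x"
  shows "{ereal (real_of_int i) | i. \<exists>j<n. x i j mod int m \<noteq> 0} =
    {ereal (real_of_int i) | i. i \<in> {i. \<exists>j<n. x i j \<noteq> 0}}"
proof -
  have "x i j mod int m = x i j" if "j < n" for i j
    using assms that by (simp add: series_def)
  then have "(\<exists>j<n. x i j mod int m \<noteq> 0) \<longleftrightarrow> (\<exists>j<n. x i j \<noteq> 0)" for i
    by metis
  then show ?thesis by simp
qed

lemma deg_plus_eq_iff:
  assumes "series m n x"
  shows "deg_plus m n x = ereal (real_of_int h) \<longleftrightarrow> highest_index n x h"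
  using assms
  unfolding deg_plus_def nonzero_indices_series[OF assms] Sup_ereal_of_int_eq_iff highest_index_def
  by (auto simp: series_def; metis not_le not_less)

lemma deg_minus_eq_iff:
  assumes "series m n x"
  shows "deg_minus m n x = ereal (real_of_int h) \<longleftrightarrow> lowest_index n x h"
  using assms
  unfolding deg_minus_def nonzero_indices_series[OF assms] Inf_ereal_of_int_eq_iff lowest_index_def
  by (auto simp: series_def; metis not_le not_less)

section \<open>Reflection\<close>

definition mirror :: "(int \<Rightarrow> 'a) \<Rightarrow> int \<Rightarrow> 'a" where
  "mirror x = (\<lambda>i. x (- i))"

lemma mirror_mirror [simp]: "mirror (mirror x) = x"
  by (simp add: mirror_def)

lemma series_mirror [simp]: "series m n (mirror x) \<longleftrightarrow> series m n x"
  unfolding series_def mirror_def by (metis minus_minus)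

lemma highest_index_mirror [simp]: "highest_index n (mirror x) h \<longleftrightarrow> lowest_index n x (- h)"
  unfolding highest_index_def lowest_index_def mirror_def by (metis minus_less_iff minus_minus)

lemma lca_mirror:
  "lca m n r Aj (mirror x) = mirror (lca m n r (\<lambda>t. Aj (- t)) x)"
proof (intro ext)
  fix i j
  show "lca m n r Aj (mirror x) i j = mirror (lca m n r (\<lambda>t. Aj (- t)) x) i j"
    using sum_symmetric_interval_uminus[where a = "int r" and f = "\<lambda>t. \<Sum>l<n. Aj t j l * x (- i - t) l"]
    by (simp add: lca_def mirror_def)
qed

lemma lca_surjective_mirror:
  assumes "lca_surjective m n r Aj"
  shows "lca_surjective m n r (\<lambda>t. Aj (- t))"
  unfolding lca_surjective_def
proof safe
  fix e assume "series m n e"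
  then obtain c where "series m n c" "lca m n r Aj c = mirror e"
    using assms series_mirror unfolding lca_surjective_def by blast
  then show "\<exists>c. series m n c \<and> lca m n r (\<lambda>t. Aj (- t)) c = e"
    using lca_mirror[of m n r "\<lambda>t. Aj (- t)" c] by (intro exI[of _ "mirror c"]) simp
qed

lemma periodic_on_tail_iterate:
  fixes f :: "int \<Rightarrow> 'a"
  assumes "0 \<le> p" "\<And>k. a \<le> k \<Longrightarrow> f (k + p) = f k" "a \<le> k"
  shows "f (k + int q * p) = f k"
proof (induction q)
  case (Suc q)
  have "0 \<le> int q * p" using assms(1) by simp
  then have "a \<le> k + int q * p" using assms(3) by linarith
  then have "f (k + int q * p + p) = f (k + int q * p)" by (rule assms(2))
  then show ?case using Suc by (simp add: algebra_simps)
qed simp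

lemma periodic_extension:
  fixes f :: "int \<Rightarrow> 'a"
  assumes "0 < p" "\<And>k. a \<le> k \<Longrightarrow> f (k + p) = f k"
  obtains g where "\<And>k. g (k + p) = g k" "\<And>k. a \<le> k \<Longrightarrow> g k = f k"
proof
  define g where "g k = f (a + (k - a) mod p)" for k
  show "g (k + p) = g k" for k
  proof -
    have "(k + p - a) mod p = (k - a + p) mod p" by (simp add: algebra_simps)
    then show ?thesis by (simp add: g_def)
  qed
  show "g k = f k" if "a \<le> k" for k
  proof -
    have "k = a + (k - a) mod p + int (nat ((k - a) div p)) * p"
      using that assms(1) by (simp add: pos_imp_zdiv_nonneg_iff algebra_simps)
    also have "f \<dots> = f (a + (k - a) mod p)"
      using assms by (intro periodic_on_tail_iterate) auto
    finally show ?thesis by (simp add: g_def)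
  qed
qed

lemma periodic_constant_on_tail:
  fixes g :: "int \<Rightarrow> 'a"
  assumes "0 < p" "\<And>k. g (k + p) = g k" "\<And>k. a \<le> k \<Longrightarrow> g k = c"
  shows "g k = c"
proof -
  define N where "N = nat (\<bar>a\<bar> + \<bar>k\<bar>)"
  have "int N \<le> int N * p" using mult_left_mono[of 1 p "int N"] assms(1) by simp
  then have "a \<le> k + int N * p" by (simp add: N_def)
  then have "g (k + int N * p) = c" by (rule assms(3))
  moreover have "g (k + int N * p) = g k"
    using assms(1,2) by (intro periodic_on_tail_iterate) auto
  ultimately show ?thesis by simp
qed

lemma finite_functions_differ_below:
  fixes S :: "(int \<Rightarrow> 'a) set"
  assumes "finite S"
  obtains B where "c \<le> B" "\<And>x y. x \<in> S \<Longrightarrow> y \<in> S \<Longrightarrow> x \<noteq> y \<Longrightarrow> \<exists>i\<le>B. x i \<noteq> y i"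
proof -
  have "\<forall>\<^sub>F B in at_top. \<forall>p\<in>S \<times> S. fst p \<noteq> snd p \<longrightarrow> (\<exists>i\<le>B. fst p i \<noteq> snd p i)"
  proof (rule eventually_ball_finite)
    show "finite (S \<times> S)" using assms by simp
    show "\<forall>p\<in>S \<times> S. \<forall>\<^sub>F B in at_top. fst p \<noteq> snd p \<longrightarrow> (\<exists>i\<le>B. fst p i \<noteq> snd p i)"
    proof
      fix p :: "(int \<Rightarrow> 'a) \<times> (int \<Rightarrow> 'a)"
      show "\<forall>\<^sub>F B in at_top. fst p \<noteq> snd p \<longrightarrow> (\<exists>i\<le>B. fst p i \<noteq> snd p i)"
      proof (cases "fst p = snd p")
        case False
        then obtain i where i: "fst p i \<noteq> snd p i" by auto
        show ?thesis by (rule eventually_mono[OF eventually_ge_at_top[of i]]) (use i in blast)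
      qed simp
    qed
  qed
  then have "\<forall>\<^sub>F B in at_top. c \<le> B \<and> (\<forall>p\<in>S \<times> S. fst p \<noteq> snd p \<longrightarrow> (\<exists>i\<le>B. fst p i \<noteq> snd p i))"
    by (intro eventually_conj eventually_ge_at_top)
  then obtain B where "c \<le> B" "\<forall>p\<in>S \<times> S. fst p \<noteq> snd p \<longrightarrow> (\<exists>i\<le>B. fst p i \<noteq> snd p i)"
    unfolding eventually_at_top_linorder by blast
  then show thesis using that by auto
qed

section \<open>Surjective linear cellular automata\<close>

locale surjective_lca =
  fixes m n r :: nat and Aj :: "int \<Rightarrow> nat \<Rightarrow> nat \<Rightarrow> int"
  assumes modulus_gt_1: "m > 1" and surjective: "lca_surjective m n r Aj"
begin

abbreviation F :: "(int \<Rightarrow> nat \<Rightarrow> int) \<Rightarrow> int \<Rightarrow> nat \<Rightarrow> int" where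
  "F \<equiv> lca m n r Aj"

abbreviation K :: nat where
  "K \<equiv> m ^ (2 * r * n)"

lemma modulus_pos: "m > 0"
  using modulus_gt_1 by simp

lemma window_preimage:
  assumes "y \<in> window m n a b"
  obtains x where "x \<in> window m n (a - int r) (b + int r)" "\<And>i j. a \<le> i \<Longrightarrow> i \<le> b \<Longrightarrow> F x i j = y i j"
proof -
  obtain c where c: "series m n c" "F c = y"
    using surjective assms by (auto simp: lca_surjective_def window_def)
  show thesis
  proof
    show "truncate (a - int r) (b + int r) c \<in> window m n (a - int r) (b + int r)"
      using modulus_pos c(1) by (rule truncate_in_window)
    show "F (truncate (a - int r) (b + int r) c) i j = y i j" if "a \<le> i" "i \<le> b" for i j
      using lca_local[of i r "truncate (a - int r) (b + int r) c" c] that c(2)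
      by (simp add: truncate_def)
  qed
qed

definition window_kernel :: "int \<Rightarrow> int \<Rightarrow> (int \<Rightarrow> nat \<Rightarrow> int) set" where
  "window_kernel a b = {x \<in> window m n (a - int r) (b + int r). \<forall>i j. a \<le> i \<and> i \<le> b \<longrightarrow> F x i j = 0}"

lemma lca_translate_window_kernel:
  assumes "k \<in> window_kernel a b" "a \<le> i" "i \<le> b"
  shows "F (\<lambda>i j. (x i j + k i j) mod int m) i j = F x i j"
proof (cases "j < n")
  case True
  have "F (\<lambda>i j. (x i j + k i j) mod int m) = F (\<lambda>i j. x i j + k i j)"
    by (rule lca_cong_mod) simp
  then have "F (\<lambda>i j. (x i j + k i j) mod int m) i j = (F x i j + F k i j) mod int m"
    using lca_add[OF True] by simp
  moreover have "F k i j = 0" using assms by (simp add: window_kernel_def)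
  ultimately show ?thesis using True by (simp add: lca_def)
next
  case False
  then show ?thesis by (simp add: lca_def)
qed

lemma inj_on_translate_window_kernel:
  assumes lift: "\<And>y i j. y \<in> window m n a b \<Longrightarrow> a \<le> i \<Longrightarrow> i \<le> b \<Longrightarrow> F (g y) i j = y i j"
  shows "inj_on (\<lambda>(y, k) i j. (g y i j + k i j) mod int m) (window m n a b \<times> window_kernel a b)"
proof (rule inj_onI, clarify)
  fix y k y' k'
  assume yk: "y \<in> window m n a b" "k \<in> window_kernel a b" "y' \<in> window m n a b" "k' \<in> window_kernel a b"
    and eq: "(\<lambda>i j. (g y i j + k i j) mod int m) = (\<lambda>i j. (g y' i j + k' i j) mod int m)"
  have y: "y = y'"
  proof (intro ext)
    fix i j
    show "y i j = y' i j"
    proof (cases "a \<le> i \<and> i \<le> b")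
      case True
      then have "y i j = F (\<lambda>i j. (g y i j + k i j) mod int m) i j"
        using lift yk lca_translate_window_kernel by simp
      also have "\<dots> = y' i j"
        unfolding eq using lift yk lca_translate_window_kernel True by simp
      finally show ?thesis .
    next
      case False
      then show ?thesis using yk by (auto simp: window_def)
    qed
  qed
  have "k = k'"
  proof (intro ext)
    fix i j
    have "(g y i j + k i j) mod int m = (g y i j + k' i j) mod int m"
      using fun_cong[OF fun_cong[OF eq, of i], of j] unfolding y .
    then have "k i j mod int m = k' i j mod int m"
      by (metis add_diff_cancel_left' mod_diff_left_eq)
    then show "k i j = k' i j"
      using yk by (cases "j < n") (auto simp: window_kernel_def window_def series_def)
  qed
  with y show "y = y' \<and> k = k'" by simp
qed

lemma card_window_kernel_le:
  assumes "a \<le> b + 1"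
  shows "card (window_kernel a b) \<le> K"
proof -
  define Out where "Out = window m n a b"
  define Blk where "Blk = window m n (a - int r) (b + int r)"
  have "\<exists>x. x \<in> Blk \<and> (\<forall>i j. a \<le> i \<and> i \<le> b \<longrightarrow> F x i j = y i j)" if "y \<in> Out" for y
    using that unfolding Out_def Blk_def by (rule window_preimage) blast
  then obtain g where g: "\<And>y. y \<in> Out \<Longrightarrow> g y \<in> Blk"
    "\<And>y i j. y \<in> Out \<Longrightarrow> a \<le> i \<Longrightarrow> i \<le> b \<Longrightarrow> F (g y) i j = y i j"
    by metis
  have "inj_on (\<lambda>(y, k) i j. (g y i j + k i j) mod int m) (Out \<times> window_kernel a b)"
    unfolding Out_def by (rule inj_on_translate_window_kernel) (use g(2) in \<open>simp add: Out_def\<close>)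
  moreover have "(\<lambda>(y, k) i j. (g y i j + k i j) mod int m) ` (Out \<times> window_kernel a b) \<subseteq> Blk"
    using g(1) modulus_pos by (auto simp: window_kernel_def Blk_def window_def series_def)
  ultimately have "card (Out \<times> window_kernel a b) \<le> card Blk"
    using finite_window[OF modulus_pos] unfolding Blk_def by (rule card_inj_on_le)
  then have "card Out * card (window_kernel a b) \<le> card Blk"
    by (simp add: card_cartesian_product)
  moreover have "card Blk = card Out * K"
  proof -
    have "nat (b + int r - (a - int r) + 1) = nat (b - a + 1) + 2 * r" using assms by simp
    then show ?thesis
      by (simp add: Out_def Blk_def card_window[OF modulus_pos] power_add algebra_simps)
  qed
  moreover have "card Out > 0"
    using modulus_pos by (simp add: Out_def card_window)
  ultimately show ?thesis by simp
qed

definition right_kernel :: "(int \<Rightarrow> nat \<Rightarrow> int) set" where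
  "right_kernel = {x. series m n x \<and> (\<forall>i j. i < - int r \<longrightarrow> x i j = 0) \<and> (\<forall>i j. 0 \<le> i \<longrightarrow> F x i j = 0)}"

lemma card_le_of_subset_right_kernel:
  assumes "finite S" "S \<subseteq> right_kernel"
  shows "card S \<le> K"
proof -
  obtain B where B: "int r \<le> B" "\<And>x y. x \<in> S \<Longrightarrow> y \<in> S \<Longrightarrow> x \<noteq> y \<Longrightarrow> \<exists>i\<le>B. x i \<noteq> y i"
    using finite_functions_differ_below[OF assms(1)] by blast
  have "inj_on (truncate (- int r) B) S"
  proof (rule inj_onI, rule ccontr)
    fix x y assume x: "x \<in> S" and y: "y \<in> S"
      and eq: "truncate (- int r) B x = truncate (- int r) B y" and "x \<noteq> y"
    then obtain i j where i: "i \<le> B" "x i j \<noteq> y i j" using B(2) by (meson ext)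
    moreover have "- int r \<le> i"
    proof (rule ccontr)
      assume "\<not> - int r \<le> i"
      then have "x i j = 0" "y i j = 0" using x y assms(2) by (auto simp: right_kernel_def)
      then show False using i(2) by simp
    qed
    ultimately show False using fun_cong[OF fun_cong[OF eq, of i], of j] by (simp add: truncate_def)
  qed
  moreover have "truncate (- int r) B ` S \<subseteq> window_kernel 0 (B - int r)"
    unfolding window_kernel_def
  proof safe
    fix x assume x: "x \<in> S"
    then show "truncate (- int r) B x \<in> window m n (0 - int r) (B - int r + int r)"
      using assms(2) truncate_in_window[OF modulus_pos] by (auto simp: right_kernel_def)
    fix i j assume "0 \<le> i" "i \<le> B - int r"
    then have "F (truncate (- int r) B x) i j = F x i j"
      by (intro lca_local) (simp add: truncate_def)
    also have "\<dots> = 0" using x assms(2) \<open>0 \<le> i\<close> by (auto simp: right_kernel_def)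
    finally show "F (truncate (- int r) B x) i j = 0" .
  qed
  ultimately have "card S \<le> card (window_kernel 0 (B - int r))"
    using finite_window[OF modulus_pos] by (intro card_inj_on_le) (auto simp: window_kernel_def)
  also have "\<dots> \<le> K" using B(1) by (intro card_window_kernel_le) simp
  finally show ?thesis .
qed

lemma finite_right_kernel: "finite right_kernel"
proof (rule ccontr)
  assume "infinite right_kernel"
  then obtain S where "S \<subseteq> right_kernel" "finite S" "card S = Suc K"
    using infinite_arbitrarily_large by blast
  then show False using card_le_of_subset_right_kernel by fastforce
qed

lemma card_right_kernel_le: "card right_kernel \<le> K"
  using card_le_of_subset_right_kernel[OF finite_right_kernel] by simp

definition shifted_tail :: "int \<Rightarrow> (int \<Rightarrow> nat \<Rightarrow> int) \<Rightarrow> int \<Rightarrow> nat \<Rightarrow> int" where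
  "shifted_tail s x = (\<lambda>i j. if - int r \<le> i then x (i + s) j else 0)"

lemma shifted_tail_in_right_kernel:
  assumes "series m n x" "\<And>i j. s \<le> i \<Longrightarrow> F x i j = 0"
  shows "shifted_tail s x \<in> right_kernel"
proof -
  have "F (shifted_tail s x) i j = 0" if "0 \<le> i" for i j
  proof -
    have "F (shifted_tail s x) i j = F (\<lambda>i. x (i + s)) i j"
      by (rule lca_local) (use that in \<open>simp add: shifted_tail_def\<close>)
    also have "\<dots> = F x (i + s) j" by (rule lca_shift)
    also have "\<dots> = 0" using assms(2) that by simp
    finally show ?thesis .
  qed
  moreover have "series m n (shifted_tail s x)"
    using assms(1) modulus_pos by (simp add: series_def shifted_tail_def)
  ultimately show ?thesis by (simp add: right_kernel_def shifted_tail_def)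
qed

lemma image_nonzero_near_highest_index:
  assumes "series m n u" "highest_index n u h"
  shows "\<exists>i \<ge> h - int K. \<exists>j<n. F u i j \<noteq> 0"
proof (rule ccontr)
  assume "\<not> ?thesis"
  then have vanish: "F u i j = 0" if "h - int K \<le> i" for i j
    using that by (cases "j < n") (auto simp: lca_def)
  obtain j0 where j0: "j0 < n" "u h j0 \<noteq> 0" using assms(2) by (auto simp: highest_index_def)
  have "inj_on (\<lambda>s. shifted_tail s u) {h - int K..h}"
  proof (rule linorder_inj_onI')
    fix s s' assume "s \<in> {h - int K..h}" "s' \<in> {h - int K..h}" "s < s'"
    then have "shifted_tail s u (h - s) j0 \<noteq> shifted_tail s' u (h - s) j0"
      using assms(2) j0 by (simp add: shifted_tail_def highest_index_def)
    then show "shifted_tail s u \<noteq> shifted_tail s' u" by metis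
  qed
  moreover have "(\<lambda>s. shifted_tail s u) ` {h - int K..h} \<subseteq> right_kernel"
    using shifted_tail_in_right_kernel[OF assms(1)] vanish by auto
  ultimately have "card {h - int K..h} \<le> card right_kernel"
    using finite_right_kernel by (rule card_inj_on_le)
  then show False using card_right_kernel_le by (simp add: nat_add_distrib nat_power_eq)
qed

lemma highest_index_image_bounds:
  assumes "series m n w" "highest_index n w h" "highest_index n (F w) h'"
  shows "h - int K \<le> h'" "h' \<le> h + int r"
proof -
  obtain i j where "h - int K \<le> i" "F w i j \<noteq> 0"
    using image_nonzero_near_highest_index[OF assms(1,2)] by blast
  then show "h - int K \<le> h'" using assms(3) unfolding highest_index_def by (meson leI order.trans)
  obtain j where "F w h' j \<noteq> 0" using assms(3) by (auto simp: highest_index_def)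
  then show "h' \<le> h + int r" using lca_zero_above_highest_index[OF assms(2)] by (meson leI)
qed

lemma highest_index_image:
  assumes "series m n u" "highest_index n u h"
  obtains h' where "h - int K \<le> h'" "h' \<le> h + int r" "highest_index n (F u) h'"
proof -
  obtain i j where "F u i j \<noteq> 0" using image_nonzero_near_highest_index[OF assms] by blast
  moreover have "i \<le> h + int r" if "F u i j \<noteq> 0" for i j
    using lca_zero_above_highest_index[OF assms(2)] that by force
  ultimately obtain h' where "highest_index n (F u) h'"
    by (rule exists_highest_index[OF series_lca[OF modulus_pos]])
  with highest_index_image_bounds[OF assms this] show thesis using that by blast
qed

lemma preimage_eventually_periodic:
  assumes "series m n w" "\<And>i j. a < i \<Longrightarrow> F w i j = 0"
  obtains p b where "0 < p" "\<And>k. b \<le> k \<Longrightarrow> w (k + p) = w k"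
proof -
  have "(\<lambda>s. shifted_tail s w) ` {a + 1..a + 1 + int K} \<subseteq> right_kernel"
    using shifted_tail_in_right_kernel[OF assms(1)] assms(2) by force
  moreover have "card right_kernel < card {a + 1..a + 1 + int K}"
    using card_right_kernel_le by (simp add: nat_add_distrib nat_power_eq)
  ultimately have "\<not> inj_on (\<lambda>s. shifted_tail s w) {a + 1..a + 1 + int K}"
    using card_inj_on_le[OF _ _ finite_right_kernel] by fastforce
  then obtain s s' where "s < s'" and eq: "shifted_tail s w = shifted_tail s' w"
    using linorder_inj_onI' by metis
  show thesis
  proof
    show "0 < s' - s" using \<open>s < s'\<close> by simp
    show "w (k + (s' - s)) = w k" if "s - int r \<le> k" for k
      using fun_cong[OF eq, of "k - s"] that by (simp add: shifted_tail_def algebra_simps)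
  qed
qed

lemma preimage_bounded_above:
  assumes "series m n u" "\<And>i j. a < i \<Longrightarrow> u i j = 0"
  obtains w b where "series m n w" "F w = u" "\<And>i j. b \<le> i \<Longrightarrow> w i j = 0"
proof -
  obtain w0 where w0: "series m n w0" "F w0 = u"
    using surjective assms(1) by (auto simp: lca_surjective_def)
  obtain p b where p: "0 < p" "\<And>k. b \<le> k \<Longrightarrow> w0 (k + p) = w0 k"
    using preimage_eventually_periodic[OF w0(1), of a] w0(2) assms(2) by blast
  obtain z where z: "\<And>k. z (k + p) = z k" "\<And>k. b \<le> k \<Longrightarrow> z k = w0 k"
    using periodic_extension[of p b w0] p by blast
  have Fz: "F z i = (\<lambda>_. 0)" for i
  proof (rule periodic_constant_on_tail[OF p(1)])
    show "F z (i + p) = F z i" for i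
      using lca_shift[of m n r Aj z p i] by (simp add: z(1) fun_eq_iff)
    show "F z i = (\<lambda>_. 0)" if "max (b + int r) (a + 1) \<le> i" for i
    proof
      fix j
      have "F z i j = F w0 i j" using that z(2) by (intro lca_local) simp
      then show "F z i j = 0" using w0(2) assms(2) that by simp
    qed
  qed
  define w where "w i j = (if j < n then (w0 i j - z i j) mod int m else 0)" for i j
  show thesis
  proof
    show "series m n w" using modulus_pos by (simp add: w_def series_def)
    show "w i j = 0" if "b \<le> i" for i j
      using z(2)[OF that] by (simp add: w_def)
    show "F w = u"
    proof (intro ext)
      fix i j
      show "F w i j = u i j"
      proof (cases "j < n")
        case True
        have "F w = F (\<lambda>i j. w0 i j - z i j)" by (rule lca_cong_mod) (simp add: w_def)
        then have "F w i j = (u i j - 0) mod int m"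
          using lca_diff[OF True] w0(2) Fz by simp
        then show ?thesis using assms(1) True by (simp add: series_def)
      next
        case False
        then show ?thesis using assms(1) by (simp add: lca_def series_def)
      qed
    qed
  qed
qed

lemma highest_index_preimage:
  assumes "series m n u" "highest_index n u h"
  obtains h' w where "h - int r \<le> h'" "h' \<le> h + int K" "series m n w" "highest_index n w h'" "F w = u"
proof -
  obtain w b where w: "series m n w" "F w = u" "\<And>i j. b \<le> i \<Longrightarrow> w i j = 0"
    using preimage_bounded_above[OF assms(1), of h] assms(2) by (auto simp: highest_index_def)
  obtain j0 where "u h j0 \<noteq> 0" using assms(2) by (auto simp: highest_index_def)
  then have "w \<noteq> (\<lambda>_ _. 0)" using w(2) lca_zero[of m n r Aj] by auto
  then obtain i j where "w i j \<noteq> 0" by (meson ext)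
  moreover have "i \<le> b" if "w i j \<noteq> 0" for i j using w(3) that by (meson le_cases)
  ultimately obtain h' where h': "highest_index n w h'"
    by (rule exists_highest_index[OF w(1)])
  have "h' - int K \<le> h" "h \<le> h' + int r"
    using highest_index_image_bounds[OF w(1) h'] assms(2) w(2) by auto
  then show thesis using that[OF _ _ w(1) h' w(2)] by linarith
qed

lemma surjective_lca_reflected: "surjective_lca m n r (\<lambda>t. Aj (- t))"
  using modulus_gt_1 lca_surjective_mirror[OF surjective] by unfold_locales

lemma lowest_index_image:
  assumes "series m n u" "lowest_index n u h"
  obtains h' where "h - int r \<le> h'" "h' \<le> h + int K" "lowest_index n (F u) h'"
proof -
  interpret mirrored: surjective_lca m n r "\<lambda>t. Aj (- t)" by (rule surjective_lca_reflected)
  have "series m n (mirror u)" "highest_index n (mirror u) (- h)"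
    using assms by simp_all
  then obtain h' where h': "- h - int K \<le> h'" "h' \<le> - h + int r"
      "highest_index n (lca m n r (\<lambda>t. Aj (- t)) (mirror u)) h'"
    by (rule mirrored.highest_index_image)
  have "lca m n r (\<lambda>t. Aj (- t)) (mirror u) = mirror (F u)"
    using lca_mirror[of m n r "\<lambda>t. Aj (- t)" u] by simp
  then have "lowest_index n (F u) (- h')" using h'(3) by simp
  moreover have "h - int r \<le> - h'" "- h' \<le> h + int K" using h'(1,2) by linarith+
  ultimately show thesis using that by blast
qed

lemma lowest_index_preimage:
  assumes "series m n u" "lowest_index n u h"
  obtains h' w where "h - int K \<le> h'" "h' \<le> h + int r" "series m n w" "lowest_index n w h'" "F w = u"
proof -
  interpret mirrored: surjective_lca m n r "\<lambda>t. Aj (- t)" by (rule surjective_lca_reflected)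
  have "series m n (mirror u)" "highest_index n (mirror u) (- h)"
    using assms by simp_all
  then obtain h' w where h': "- h - int r \<le> h'" "h' \<le> - h + int K" "series m n w"
      "highest_index n w h'" "lca m n r (\<lambda>t. Aj (- t)) w = mirror u"
    by (rule mirrored.highest_index_preimage)
  have "F (mirror w) = u"
    using lca_mirror[of m n r Aj w] h'(5) by (metis mirror_mirror)
  moreover have "lowest_index n (mirror w) (- h')"
    using h'(4) highest_index_mirror[of n "mirror w" h'] by simp
  moreover have "h - int K \<le> - h'" "- h' \<le> h + int r" using h'(1,2) by linarith+
  ultimately show thesis using that[of "- h'" "mirror w"] h'(3) by simp
qed

lemma deg_plus_preimage:
  assumes "series m n u" "deg_plus m n u = 0"
  shows "\<exists>h w. - int r \<le> h \<and> h \<le> int K \<and> series m n w \<and> deg_plus m n w = ereal (real_of_int h) \<and> F w = u"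
proof -
  have "highest_index n u 0"
    using assms deg_plus_eq_iff[OF assms(1), of 0] by (simp add: zero_ereal_def)
  then obtain h w where "- int r \<le> h" "h \<le> int K" "series m n w" "highest_index n w h" "F w = u"
    by (auto elim: highest_index_preimage[OF assms(1)])
  then show ?thesis using deg_plus_eq_iff by blast
qed

lemma deg_minus_preimage:
  assumes "series m n u" "deg_minus m n u = 0"
  shows "\<exists>h w. - int K \<le> h \<and> h \<le> int r \<and> series m n w \<and> deg_minus m n w = ereal (real_of_int h) \<and> F w = u"
proof -
  have "lowest_index n u 0"
    using assms deg_minus_eq_iff[OF assms(1), of 0] by (simp add: zero_ereal_def)
  then obtain h w where "- int K \<le> h" "h \<le> int r" "series m n w" "lowest_index n w h" "F w = u"
    by (auto elim: lowest_index_preimage[OF assms(1)])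
  then show ?thesis using deg_minus_eq_iff by blast
qed

lemma deg_plus_image:
  assumes "series m n u" "deg_plus m n u = 0"
  shows "\<exists>h. - int K \<le> h \<and> h \<le> int r \<and> deg_plus m n (F u) = ereal (real_of_int h)"
proof -
  have "highest_index n u 0"
    using assms deg_plus_eq_iff[OF assms(1), of 0] by (simp add: zero_ereal_def)
  then obtain h where "- int K \<le> h" "h \<le> int r" "highest_index n (F u) h"
    by (auto elim: highest_index_image[OF assms(1)])
  then show ?thesis using deg_plus_eq_iff[OF series_lca[OF modulus_pos]] by blast
qed

lemma deg_minus_image:
  assumes "series m n u" "deg_minus m n u = 0"
  shows "\<exists>h. - int r \<le> h \<and> h \<le> int K \<and> deg_minus m n (F u) = ereal (real_of_int h)"
proof -
  have "lowest_index n u 0"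
    using assms deg_minus_eq_iff[OF assms(1), of 0] by (simp add: zero_ereal_def)
  then obtain h where "- int r \<le> h" "h \<le> int K" "lowest_index n (F u) h"
    by (auto elim: lowest_index_image[OF assms(1)])
  then show ?thesis using deg_minus_eq_iff[OF series_lca[OF modulus_pos]] by blast
qed

end

theorem lemma3:
  fixes m n r :: nat and Aj :: "int \<Rightarrow> nat \<Rightarrow> nat \<Rightarrow> int"
  assumes "m > 1" and "n > 1"
    and "lca_surjective m n r Aj"
  defines "A \<equiv> assoc_matrix r Aj"
  shows "\<exists>c::nat.
    (\<forall>u. series m n u \<and> deg_plus m n u = 0 \<longrightarrow>
       (\<exists>h::int. - int c \<le> h \<and> h \<le> int c \<and>
          (\<exists>w. series m n w \<and> deg_plus m n w = ereal (real_of_int h) \<and> lmat_act m n A w = u))) \<and>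
    (\<forall>u. series m n u \<and> deg_minus m n u = 0 \<longrightarrow>
       (\<exists>h::int. - int c \<le> h \<and> h \<le> int c \<and>
          (\<exists>w. series m n w \<and> deg_minus m n w = ereal (real_of_int h) \<and> lmat_act m n A w = u))) \<and>
    (\<forall>u. series m n u \<and> deg_plus m n u = 0 \<longrightarrow>
       (\<exists>h::int. - int c \<le> h \<and> h \<le> int c \<and> deg_plus m n (lmat_act m n A u) = ereal (real_of_int h))) \<and>
    (\<forall>u. series m n u \<and> deg_minus m n u = 0 \<longrightarrow>
       (\<exists>h::int. - int c \<le> h \<and> h \<le> int c \<and> deg_minus m n (lmat_act m n A u) = ereal (real_of_int h)))"
proof -
  interpret surjective_lca m n r Aj
    using assms(1,3) by unfold_locales
  have "lmat_act m n A = F"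
    unfolding A_def using modulus_pos by (rule lmat_act_assoc_matrix)
  have widen: "\<exists>h. - int (max K r) \<le> h \<and> h \<le> int (max K r) \<and> P h"
    if bounded: "\<exists>h. (- int K \<le> h \<and> h \<le> int r \<or> - int r \<le> h \<and> h \<le> int K) \<and> P h" for P
  proof -
    obtain h where h: "- int K \<le> h \<and> h \<le> int r \<or> - int r \<le> h \<and> h \<le> int K" "P h"
      using bounded by blast
    then have "- int (max K r) \<le> h" "h \<le> int (max K r)" by (auto simp: of_nat_max)
    with h(2) show ?thesis by blast
  qed
  show ?thesis
    unfolding \<open>lmat_act m n A = F\<close>
    by (intro exI[of _ "max K r"] conjI allI impI widen; elim conjE)
      (blast dest: deg_plus_preimage, blast dest: deg_minus_preimage,
        blast dest: deg_plus_image, blast dest: deg_minus_image)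
qed

end
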